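(* Let $\mathbf{I}$ be a $d$-system of ideals in a ring $R$ and $A:=\mathscr{A}(R,\mathbf{I})$. For all $1\le k\le d$, there is an isomorphism of left $A$-modules $\Delta_k\cong J_{k-1}T_{d+1-k}$.
   Context: A $d$-system of ideals in $R$ is a collection $\{I_{ij}\mid1\le i,j\le d+1\}$ of two-sided ideals with $I_{ij}I_{jk}\subset I_{ik}$ and $I_{ij}=R$ for $i\ge j$. $\mathscr{A}(R,\mathbf{I}):=\bigoplus_{1\le i,j\le d}X_{ij}$, $X_{ij}:=I_{ij}/I_{i,d+1}$, with multiplication $(x+I_{i,d+1})(y+I_{k,d+1})=\delta_{jk}(xy+I_{i,d+1})\in X_{il}$ for $x\in I_{ij},y\in I_{kl}$. Put $e_k:=1+I_{k,d+1}\in X_{kk}$, $f_j:=\sum_{k>j}e_k$ for $0\le j\le d$ ($f_0=1$, $f_d=0$), $J_j:=Af_jA$, $\Delta_k:=(A/J_k)e_k$. Define $\mathbb{T}_{kl}:=R/I_{k,d+2-l}$ and $T_j:=\bigoplus_{i=1}^d\mathbb{T}_{ij}$, a left $A$-module via $(x+I_{i,d+1})\cdot(r+I_{k,d+2-l})=\delta_{jk}(xr+I_{i,d+2-l})\in\mathbb{T}_{il}$ for $x\in I_{ij}$, $r\in R$. *)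

theory Defs
  imports "HOL-Algebra.Algebra" "HOL-Algebra.Ideal_Product"
begin

definition d_system :: "('a,'m) ring_scheme \<Rightarrow> nat \<Rightarrow> (nat \<Rightarrow> nat \<Rightarrow> 'a set) \<Rightarrow> bool" where
  "d_system R d I \<longleftrightarrow> ring R \<and>
     (\<forall>i\<in>{1..d+1}. \<forall>j\<in>{1..d+1}. ideal (I i j) R) \<and>
     (\<forall>i\<in>{1..d+1}. \<forall>j\<in>{1..d+1}. \<forall>k\<in>{1..d+1}. ideal_prod R (I i j) (I j k) \<subseteq> I i k) \<and>
     (\<forall>i\<in>{1..d+1}. \<forall>j\<in>{1..d+1}. j \<le> i \<longrightarrow> I i j = carrier R)"

definition rep :: "'a set \<Rightarrow> 'a" where
  "rep C = (SOME x. x \<in> C)"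

text \<open>X_ij = I_ij / I_{i,d+1}, as the set of cosets x + I_{i,d+1} with x in I_ij.\<close>
definition Xset :: "('a,'m) ring_scheme \<Rightarrow> nat \<Rightarrow> (nat \<Rightarrow> nat \<Rightarrow> 'a set) \<Rightarrow> nat \<Rightarrow> nat \<Rightarrow> 'a set set" where
  "Xset R d I i j = (\<lambda>x. I i (d+1) +>\<^bsub>R\<^esub> x) ` I i j"

text \<open>The algebra A(R,I) = direct sum of the X_ij (1 \<le> i,j \<le> d), elements written as
  d\<times>d arrays of cosets (entries outside the index range are the dummy value {}).
  Multiplication: (x_ij)(y_kl) = delta_jk (x y + I_{i,d+1}).\<close>
definition Alg :: "('a,'m) ring_scheme \<Rightarrow> nat \<Rightarrow> (nat \<Rightarrow> nat \<Rightarrow> 'a set) \<Rightarrow> (nat \<Rightarrow> nat \<Rightarrow> 'a set) ring" where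
  "Alg R d I = \<lparr>
     carrier = {M. \<forall>i j. if i \<in> {1..d} \<and> j \<in> {1..d} then M i j \<in> Xset R d I i j else M i j = {}},
     monoid.mult = (\<lambda>M N i l. if i \<in> {1..d} \<and> l \<in> {1..d}
              then I i (d+1) +>\<^bsub>R\<^esub> (\<Oplus>\<^bsub>R\<^esub>j\<in>{1..d}. rep (M i j) \<otimes>\<^bsub>R\<^esub> rep (N j l)) else {}),
     monoid.one = (\<lambda>i j. if i \<in> {1..d} \<and> j \<in> {1..d}
              then I i (d+1) +>\<^bsub>R\<^esub> (if i = j then \<one>\<^bsub>R\<^esub> else \<zero>\<^bsub>R\<^esub>) else {}),
     ring.zero = (\<lambda>i j. if i \<in> {1..d} \<and> j \<in> {1..d} then I i (d+1) +>\<^bsub>R\<^esub> \<zero>\<^bsub>R\<^esub> else {}),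
     ring.add = (\<lambda>M N i j. if i \<in> {1..d} \<and> j \<in> {1..d}
              then I i (d+1) +>\<^bsub>R\<^esub> (rep (M i j) \<oplus>\<^bsub>R\<^esub> rep (N i j)) else {}) \<rparr>"

definition idem_e :: "('a,'m) ring_scheme \<Rightarrow> nat \<Rightarrow> (nat \<Rightarrow> nat \<Rightarrow> 'a set) \<Rightarrow> nat \<Rightarrow> (nat \<Rightarrow> nat \<Rightarrow> 'a set)" where
  "idem_e R d I k = (\<lambda>i j. if i \<in> {1..d} \<and> j \<in> {1..d}
       then I i (d+1) +>\<^bsub>R\<^esub> (if i = k \<and> j = k then \<one>\<^bsub>R\<^esub> else \<zero>\<^bsub>R\<^esub>) else {})"

definition idem_f :: "('a,'m) ring_scheme \<Rightarrow> nat \<Rightarrow> (nat \<Rightarrow> nat \<Rightarrow> 'a set) \<Rightarrow> nat \<Rightarrow> (nat \<Rightarrow> nat \<Rightarrow> 'a set)" where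
  "idem_f R d I j = (\<Oplus>\<^bsub>Alg R d I\<^esub>k\<in>{j<..d}. idem_e R d I k)"

definition Jid :: "('a,'m) ring_scheme \<Rightarrow> nat \<Rightarrow> (nat \<Rightarrow> nat \<Rightarrow> 'a set) \<Rightarrow> nat \<Rightarrow> (nat \<Rightarrow> nat \<Rightarrow> 'a set) set" where
  "Jid R d I j = Idl\<^bsub>Alg R d I\<^esub> {idem_f R d I j}"

record ('r, 'v) lmod =
  lcarrier :: "'v set"
  ladd :: "'v \<Rightarrow> 'v \<Rightarrow> 'v"
  lact :: "'r \<Rightarrow> 'v \<Rightarrow> 'v"

definition lmod_iso :: "('r,'n) ring_scheme \<Rightarrow> ('r,'v) lmod \<Rightarrow> ('r,'w) lmod \<Rightarrow> bool" where
  "lmod_iso A M N \<longleftrightarrow> (\<exists>\<phi>. bij_betw \<phi> (lcarrier M) (lcarrier N) \<and>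
     (\<forall>x\<in>lcarrier M. \<forall>y\<in>lcarrier M. \<phi> (ladd M x y) = ladd N (\<phi> x) (\<phi> y)) \<and>
     (\<forall>a\<in>carrier A. \<forall>x\<in>lcarrier M. \<phi> (lact M a x) = lact N a (\<phi> x)))"

definition Delta :: "('a,'m) ring_scheme \<Rightarrow> nat \<Rightarrow> (nat \<Rightarrow> nat \<Rightarrow> 'a set) \<Rightarrow> nat
    \<Rightarrow> (nat \<Rightarrow> nat \<Rightarrow> 'a set, (nat \<Rightarrow> nat \<Rightarrow> 'a set) set) lmod" where
  "Delta R d I k = (let A = Alg R d I; J = Jid R d I k; Q = A Quot J in
     \<lparr> lcarrier = {x \<otimes>\<^bsub>Q\<^esub> (J +>\<^bsub>A\<^esub> idem_e R d I k) | x. x \<in> carrier Q},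
       ladd = add Q,
       lact = (\<lambda>a m. (J +>\<^bsub>A\<^esub> a) \<otimes>\<^bsub>Q\<^esub> m) \<rparr>)"

text \<open>T_j = direct sum over i = 1..d of R / I_{i,d+2-j}, with the A-action
  (x + I_{i,d+1}) (r + I_{k,d+2-j}) = delta (x r + I_{i,d+2-j}) for x in I_ik.\<close>
definition Tmod :: "('a,'m) ring_scheme \<Rightarrow> nat \<Rightarrow> (nat \<Rightarrow> nat \<Rightarrow> 'a set) \<Rightarrow> nat
    \<Rightarrow> (nat \<Rightarrow> nat \<Rightarrow> 'a set, nat \<Rightarrow> 'a set) lmod" where
  "Tmod R d I j = \<lparr>
     lcarrier = {t. \<forall>i. if i \<in> {1..d} then t i \<in> a_rcosets\<^bsub>R\<^esub> (I i (d+2-j)) else t i = {}},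
     ladd = (\<lambda>t s i. if i \<in> {1..d} then I i (d+2-j) +>\<^bsub>R\<^esub> (rep (t i) \<oplus>\<^bsub>R\<^esub> rep (s i)) else {}),
     lact = (\<lambda>M t i. if i \<in> {1..d}
              then I i (d+2-j) +>\<^bsub>R\<^esub> (\<Oplus>\<^bsub>R\<^esub>k\<in>{1..d}. rep (M i k) \<otimes>\<^bsub>R\<^esub> rep (t k)) else {}) \<rparr>"

text \<open>The product J N of a (left) ideal J of A and a left A-module N: all finite sums of
  elements a \<cdot> t with a in J and t in N (together with 0).\<close>
inductive_set prod_sub :: "'v \<Rightarrow> ('r,'v) lmod \<Rightarrow> 'r set \<Rightarrow> 'v set"
  for z :: 'v and N :: "('r,'v) lmod" and J :: "'r set" where
    zero: "z \<in> prod_sub z N J"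
  | gen: "a \<in> J \<Longrightarrow> t \<in> lcarrier N \<Longrightarrow> lact N a t \<in> prod_sub z N J"
  | add: "x \<in> prod_sub z N J \<Longrightarrow> y \<in> prod_sub z N J \<Longrightarrow> ladd N x y \<in> prod_sub z N J"

definition Tzero :: "('a,'m) ring_scheme \<Rightarrow> nat \<Rightarrow> (nat \<Rightarrow> nat \<Rightarrow> 'a set) \<Rightarrow> nat \<Rightarrow> nat \<Rightarrow> 'a set" where
  "Tzero R d I j = (\<lambda>i. if i \<in> {1..d} then I i (d+2-j) +>\<^bsub>R\<^esub> \<zero>\<^bsub>R\<^esub> else {})"

definition JT :: "('a,'m) ring_scheme \<Rightarrow> nat \<Rightarrow> (nat \<Rightarrow> nat \<Rightarrow> 'a set) \<Rightarrow> nat \<Rightarrow> nat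
    \<Rightarrow> (nat \<Rightarrow> nat \<Rightarrow> 'a set, nat \<Rightarrow> 'a set) lmod" where
  "JT R d I m j = (let T = Tmod R d I j in
     T\<lparr> lcarrier := prod_sub (Tzero R d I j) T (Jid R d I m) \<rparr>)"

end

theory Submission
  imports Defs
begin

text \<open>Every element of A is the class of a d \<times> d matrix m over R with m i j \<in> I i j, and A
  multiplies such classes like matrices. Right multiplication by e_k keeps only column k, so an
  element of \<Delta>_k is represented by a single column c with c i \<in> I i k. The ideal J_k is
  contained in the matrices whose columns j \<le> k have entries in I i (k+1), and conversely it
  contains every matrix supported in column k with entries in I i (k+1); hence \<Delta>_k is the
  module of such columns c modulo I i (k+1). On the other side, T_{d+1-k} is the module of
  columns of cosets modulo I i (k+1), and J_{k-1} T_{d+1-k} consists exactly of the columns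
  of cosets represented by entries c i \<in> I i k. The isomorphism sends the class of c to the
  column (c i + I i (k+1))_i.\<close>

subsection \<open>Cosets and finite sums in a ring\<close>

lemma (in ring) rcos_eq_iff_diff:
  assumes "ideal K R" "x \<in> carrier R" "y \<in> carrier R"
  shows "K +> x = K +> y \<longleftrightarrow> x \<ominus> y \<in> K"
proof -
  interpret K: ideal K R by fact
  have "K +> x = K +> y \<longleftrightarrow> x \<in> K +> y"
    using K.a_repr_independence' K.a_repr_independenceD assms(2,3) by metis
  also have "\<dots> \<longleftrightarrow> x \<ominus> y \<in> K"
    by (rule K.a_rcos_module_minus[OF ring_axioms assms(3,2)])
  finally show ?thesis .
qed

lemma (in ring) rep_rcos_mem:
  assumes "ideal K R" "x \<in> carrier R"
  shows "rep (K +> x) \<in> K +> x"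
proof -
  interpret K: ideal K R by fact
  show ?thesis unfolding rep_def using K.a_rcos_self[OF assms(2)] by (rule someI)
qed

lemma (in ring) rep_rcos_closed:
  assumes "ideal K R" "x \<in> carrier R"
  shows "rep (K +> x) \<in> carrier R"
proof -
  interpret K: ideal K R by fact
  show ?thesis using rep_rcos_mem[OF assms] K.a_elemrcos_carrier assms(2) by blast
qed

lemma (in ring) rep_rcos_diff:
  assumes "ideal K R" "x \<in> carrier R"
  shows "rep (K +> x) \<ominus> x \<in> K"
proof -
  interpret K: ideal K R by fact
  show ?thesis
    using rep_rcos_mem[OF assms] K.a_rcos_module_minus[OF ring_axioms assms(2) rep_rcos_closed[OF assms]]
    by simp
qed

lemma (in ring) rcos_rep:
  assumes "ideal K R" "x \<in> carrier R"
  shows "K +> rep (K +> x) = K +> x"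
  using rcos_eq_iff_diff[OF assms(1) rep_rcos_closed[OF assms] assms(2)] rep_rcos_diff[OF assms]
  by simp

lemma (in ring) rcos_add_reps:
  assumes "ideal K R" "x \<in> carrier R" "y \<in> carrier R"
  shows "K +> (rep (K +> x) \<oplus> rep (K +> y)) = K +> (x \<oplus> y)"
proof -
  interpret K: ideal K R by fact
  have "K +> (rep (K +> x) \<oplus> rep (K +> y)) = (K +> rep (K +> x)) <+> (K +> rep (K +> y))"
    using assms by (simp add: K.a_rcos_sum rep_rcos_closed)
  also have "\<dots> = K +> (x \<oplus> y)"
    using assms by (simp add: K.a_rcos_sum rcos_rep)
  finally show ?thesis .
qed

lemma (in ring) rcos_subset_iff:
  assumes "ideal K R" "ideal L R" "K \<subseteq> L" "x \<in> carrier R"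
  shows "K +> x \<subseteq> L \<longleftrightarrow> x \<in> L"
proof -
  interpret K: ideal K R by fact
  interpret L: ideal L R by fact
  have x: "x \<in> K +> x" using K.a_rcos_self assms by simp
  show ?thesis
  proof
    assume "K +> x \<subseteq> L" then show "x \<in> L" using x by blast
  next
    assume "x \<in> L"
    then show "K +> x \<subseteq> L"
      unfolding a_r_coset_def r_coset_def using assms L.a_closed by auto
  qed
qed

lemma (in ring) finsum_in_ideal:
  assumes "ideal K R" "finite F" "\<And>j. j \<in> F \<Longrightarrow> f j \<in> K"
  shows "(\<Oplus>j\<in>F. f j) \<in> K"
  using assms(2,3)
proof (induction F rule: finite_induct)
  case empty
  then show ?case by (simp add: additive_subgroup.zero_closed assms(1) ideal.axioms(1))
next
  case (insert x F)
  then have "f \<in> F \<rightarrow> carrier R" "f x \<in> carrier R" using ideal.Icarr[OF assms(1)] by auto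
  then show ?case using insert by (simp add: additive_subgroup.a_closed assms(1) ideal.axioms(1))
qed

lemma (in ring) finsum_diff_in_ideal:
  assumes "ideal K R" "finite F" "f \<in> F \<rightarrow> carrier R" "g \<in> F \<rightarrow> carrier R"
    "\<And>j. j \<in> F \<Longrightarrow> f j \<ominus> g j \<in> K"
  shows "(\<Oplus>j\<in>F. f j) \<ominus> (\<Oplus>j\<in>F. g j) \<in> K"
  using assms(2-5)
proof (induction F rule: finite_induct)
  case empty
  then show ?case by (simp add: minus_eq r_neg additive_subgroup.zero_closed assms(1) ideal.axioms(1))
next
  case (insert x F)
  then have c: "f \<in> F \<rightarrow> carrier R" "f x \<in> carrier R" "g \<in> F \<rightarrow> carrier R" "g x \<in> carrier R"
    by auto
  have "(f x \<oplus> finsum R f F) \<ominus> (g x \<oplus> finsum R g F) = (f x \<ominus> g x) \<oplus> (finsum R f F \<ominus> finsum R g F)"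
    using c by (simp add: minus_eq minus_add a_ac)
  then show ?case using insert c
    by (simp add: additive_subgroup.a_closed assms(1) ideal.axioms(1))
qed

lemma (in ring) rcos_finsum_cong:
  assumes "ideal K R" "finite F" "f \<in> F \<rightarrow> carrier R" "g \<in> F \<rightarrow> carrier R"
    "\<And>j. j \<in> F \<Longrightarrow> f j \<ominus> g j \<in> K"
  shows "K +> (\<Oplus>j\<in>F. f j) = K +> (\<Oplus>j\<in>F. g j)"
  using rcos_eq_iff_diff[OF assms(1) finsum_closed[OF assms(3)] finsum_closed[OF assms(4)]]
    finsum_diff_in_ideal[OF assms]
  by simp

lemma (in ring) mult_diff_split:
  assumes "r \<in> carrier R" "s \<in> carrier R" "m \<in> carrier R" "n \<in> carrier R"
  shows "r \<otimes> s \<ominus> m \<otimes> n = (r \<ominus> m) \<otimes> s \<oplus> m \<otimes> (s \<ominus> n)"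
proof -
  have "\<ominus>(m \<otimes> s) \<oplus> (m \<otimes> s \<oplus> \<ominus>(m \<otimes> n)) = \<ominus>(m \<otimes> n)"
    using assms by (simp add: a_assoc[symmetric] l_neg)
  then show ?thesis using assms by (simp add: minus_eq l_distr r_distr l_minus r_minus a_assoc)
qed

lemma (in ring) finsum_delta:
  assumes "finite F" "g \<in> carrier R"
  shows "(\<Oplus>j\<in>F. if j = j0 then g else \<zero>) = (if j0 \<in> F then g else \<zero>)"
proof (cases "j0 \<in> F")
  case True
  then show ?thesis using add.finprod_singleton_swap[of j0 F "\<lambda>_. g"] assms by auto
next
  case False
  then have "(\<Oplus>j\<in>F. if j = j0 then g else \<zero>) = (\<Oplus>j\<in>F. \<zero>)"
    by (intro finsum_cong') auto
  then show ?thesis using False by simp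
qed

lemma (in ring) finsum_swap:
  assumes "finite A" "finite B" "\<And>i j. i \<in> A \<Longrightarrow> j \<in> B \<Longrightarrow> f i j \<in> carrier R"
  shows "(\<Oplus>i\<in>A. \<Oplus>j\<in>B. f i j) = (\<Oplus>j\<in>B. \<Oplus>i\<in>A. f i j)"
  using assms(1,3)
proof (induction A rule: finite_induct)
  case empty
  then show ?case using assms(2) by (simp add: finsum_zero)
next
  case (insert x F)
  have "(\<Oplus>j\<in>B. \<Oplus>i\<in>insert x F. f i j) = (\<Oplus>j\<in>B. f x j \<oplus> (\<Oplus>i\<in>F. f i j))"
    by (rule finsum_cong') (use insert in auto)
  also have "\<dots> = (\<Oplus>j\<in>B. f x j) \<oplus> (\<Oplus>j\<in>B. \<Oplus>i\<in>F. f i j)"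
    by (rule finsum_addf) (use insert in auto)
  finally show ?case using insert by (simp add: Pi_def)
qed

lemma (in ring) finsum_mat_assoc:
  assumes "finite F" "\<And>j. j \<in> F \<Longrightarrow> x j \<in> carrier R"
    "\<And>j l. j \<in> F \<Longrightarrow> l \<in> F \<Longrightarrow> y j l \<in> carrier R" "\<And>l. l \<in> F \<Longrightarrow> z l \<in> carrier R"
  shows "(\<Oplus>l\<in>F. (\<Oplus>j\<in>F. x j \<otimes> y j l) \<otimes> z l) = (\<Oplus>j\<in>F. x j \<otimes> (\<Oplus>l\<in>F. y j l \<otimes> z l))"
proof -
  have "(\<Oplus>l\<in>F. (\<Oplus>j\<in>F. x j \<otimes> y j l) \<otimes> z l) = (\<Oplus>l\<in>F. \<Oplus>j\<in>F. x j \<otimes> y j l \<otimes> z l)"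
    by (rule finsum_cong') (use assms in \<open>auto simp: finsum_ldistr\<close>)
  also have "\<dots> = (\<Oplus>j\<in>F. \<Oplus>l\<in>F. x j \<otimes> y j l \<otimes> z l)"
    by (rule finsum_swap) (use assms in auto)
  also have "\<dots> = (\<Oplus>j\<in>F. x j \<otimes> (\<Oplus>l\<in>F. y j l \<otimes> z l))"
  proof (rule finsum_cong')
    fix j assume j: "j \<in> F"
    have "(\<Oplus>l\<in>F. x j \<otimes> y j l \<otimes> z l) = (\<Oplus>l\<in>F. x j \<otimes> (y j l \<otimes> z l))"
      by (rule finsum_cong') (use assms j in \<open>auto simp: m_assoc\<close>)
    also have "\<dots> = x j \<otimes> (\<Oplus>l\<in>F. y j l \<otimes> z l)"
      by (rule finsum_rdistr[symmetric]) (use assms j in auto)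
    finally show "(\<Oplus>l\<in>F. x j \<otimes> y j l \<otimes> z l) = x j \<otimes> (\<Oplus>l\<in>F. y j l \<otimes> z l)" .
  qed (use assms in auto)
  finally show ?thesis .
qed

lemma (in ring) finsum_unit_mult:
  assumes "finite F" "i \<in> F" "\<And>j. j \<in> F \<Longrightarrow> x j \<in> carrier R"
  shows "(\<Oplus>j\<in>F. (if i = j then \<one> else \<zero>) \<otimes> x j) = x i"
proof -
  have "(\<Oplus>j\<in>F. (if i = j then \<one> else \<zero>) \<otimes> x j) = (\<Oplus>j\<in>F. if j = i then x i else \<zero>)"
    by (rule finsum_cong') (use assms in auto)
  then show ?thesis using assms by (simp add: finsum_delta)
qed

lemma (in ring) finsum_mult_unit:
  assumes "finite F" "l \<in> F" "\<And>j. j \<in> F \<Longrightarrow> x j \<in> carrier R"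
  shows "(\<Oplus>j\<in>F. x j \<otimes> (if j = l then \<one> else \<zero>)) = x l"
proof -
  have "(\<Oplus>j\<in>F. x j \<otimes> (if j = l then \<one> else \<zero>)) = (\<Oplus>j\<in>F. if j = l then x l else \<zero>)"
    by (rule finsum_cong') (use assms in auto)
  then show ?thesis using assms by (simp add: finsum_delta)
qed

lemma (in ring) finsum_add_mult:
  assumes "finite F" "\<And>j. j \<in> F \<Longrightarrow> x j \<in> carrier R \<and> y j \<in> carrier R \<and> z j \<in> carrier R"
  shows "(\<Oplus>j\<in>F. (x j \<oplus> y j) \<otimes> z j) = (\<Oplus>j\<in>F. x j \<otimes> z j) \<oplus> (\<Oplus>j\<in>F. y j \<otimes> z j)"
proof -
  have "(\<Oplus>j\<in>F. (x j \<oplus> y j) \<otimes> z j) = (\<Oplus>j\<in>F. x j \<otimes> z j \<oplus> y j \<otimes> z j)"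
    by (rule finsum_cong') (use assms in \<open>auto simp: l_distr\<close>)
  also have "\<dots> = (\<Oplus>j\<in>F. x j \<otimes> z j) \<oplus> (\<Oplus>j\<in>F. y j \<otimes> z j)"
    by (rule finsum_addf) (use assms in auto)
  finally show ?thesis .
qed

lemma (in ring) finsum_mult_add:
  assumes "finite F" "\<And>j. j \<in> F \<Longrightarrow> x j \<in> carrier R \<and> y j \<in> carrier R \<and> z j \<in> carrier R"
  shows "(\<Oplus>j\<in>F. z j \<otimes> (x j \<oplus> y j)) = (\<Oplus>j\<in>F. z j \<otimes> x j) \<oplus> (\<Oplus>j\<in>F. z j \<otimes> y j)"
proof -
  have "(\<Oplus>j\<in>F. z j \<otimes> (x j \<oplus> y j)) = (\<Oplus>j\<in>F. z j \<otimes> x j \<oplus> z j \<otimes> y j)"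
    by (rule finsum_cong') (use assms in \<open>auto simp: r_distr\<close>)
  also have "\<dots> = (\<Oplus>j\<in>F. z j \<otimes> x j) \<oplus> (\<Oplus>j\<in>F. z j \<otimes> y j)"
    by (rule finsum_addf) (use assms in auto)
  finally show ?thesis .
qed

subsection \<open>A as a ring of matrix classes\<close>

locale ideal_system = ring R for R (structure) +
  fixes d :: nat and I :: "nat \<Rightarrow> nat \<Rightarrow> 'a set"
  assumes ideal_I: "i \<in> {1..d+1} \<Longrightarrow> j \<in> {1..d+1} \<Longrightarrow> ideal (I i j) R"
    and I_prod: "i \<in> {1..d+1} \<Longrightarrow> j \<in> {1..d+1} \<Longrightarrow> l \<in> {1..d+1} \<Longrightarrow>
      ideal_prod R (I i j) (I j l) \<subseteq> I i l"
    and I_full: "i \<in> {1..d+1} \<Longrightarrow> j \<in> {1..d+1} \<Longrightarrow> j \<le> i \<Longrightarrow> I i j = carrier R"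

lemma d_system_imp_ideal_system: "d_system R d I \<Longrightarrow> ideal_system R d I"
  unfolding d_system_def ideal_system_def ideal_system_axioms_def by blast

context ideal_system
begin

abbreviation "A \<equiv> Alg R d I"

lemma I_carrier: "i \<in> {1..d+1} \<Longrightarrow> j \<in> {1..d+1} \<Longrightarrow> x \<in> I i j \<Longrightarrow> x \<in> carrier R"
  by (rule ideal.Icarr[OF ideal_I])

lemma I_mult:
  "i \<in> {1..d+1} \<Longrightarrow> j \<in> {1..d+1} \<Longrightarrow> l \<in> {1..d+1} \<Longrightarrow> x \<in> I i j \<Longrightarrow> y \<in> I j l \<Longrightarrow> x \<otimes> y \<in> I i l"
  using I_prod[of i j l] ideal_prod.prod[of x "I i j" y "I j l" R] by blast

lemma I_mult_right: "i \<in> {1..d+1} \<Longrightarrow> j \<in> {1..d+1} \<Longrightarrow> x \<in> carrier R \<Longrightarrow> y \<in> I i j \<Longrightarrow> y \<otimes> x \<in> I i j"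
  by (rule ideal.I_r_closed[OF ideal_I])

lemma I_add: "i \<in> {1..d+1} \<Longrightarrow> j \<in> {1..d+1} \<Longrightarrow> x \<in> I i j \<Longrightarrow> y \<in> I i j \<Longrightarrow> x \<oplus> y \<in> I i j"
  by (rule additive_subgroup.a_closed[OF ideal.axioms(1)[OF ideal_I]])

lemma I_neg: "i \<in> {1..d+1} \<Longrightarrow> j \<in> {1..d+1} \<Longrightarrow> x \<in> I i j \<Longrightarrow> \<ominus> x \<in> I i j"
  by (rule additive_subgroup.a_inv_closed[OF ideal.axioms(1)[OF ideal_I]])

lemma I_diff: "i \<in> {1..d+1} \<Longrightarrow> j \<in> {1..d+1} \<Longrightarrow> x \<in> I i j \<Longrightarrow> y \<in> I i j \<Longrightarrow> x \<ominus> y \<in> I i j"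
  using I_add I_neg by (simp add: minus_eq)

lemma I_zero: "i \<in> {1..d+1} \<Longrightarrow> j \<in> {1..d+1} \<Longrightarrow> \<zero> \<in> I i j"
  by (rule additive_subgroup.zero_closed[OF ideal.axioms(1)[OF ideal_I]])

lemma I_antimono:
  assumes "i \<in> {1..d+1}" "1 \<le> j" "j \<le> l" "l \<le> d+1"
  shows "I i l \<subseteq> I i j"
proof
  fix x assume x: "x \<in> I i l"
  have "l \<in> {1..d+1}" "j \<in> {1..d+1}" "\<one> \<in> I l j" using I_full[of l j] assms by auto
  then have "x \<otimes> \<one> \<in> I i j" using I_mult[OF assms(1) _ _ x] by blast
  then show "x \<in> I i j" using I_carrier[OF assms(1) _ x] assms by simp
qed

lemma I_top_subset: "i \<in> {1..d+1} \<Longrightarrow> j \<in> {1..d+1} \<Longrightarrow> I i (d+1) \<subseteq> I i j"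
  by (rule I_antimono) auto

lemma ideal_I_top: "i \<in> {1..d} \<Longrightarrow> ideal (I i (d+1)) R"
  by (rule ideal_I) auto

lemma mult_diff_in_I:
  assumes "i \<in> {1..d+1}" "j \<in> {1..d+1}" "l \<in> {1..d+1}"
    and "x \<in> I i j" "x' \<in> carrier R" "x' \<ominus> x \<in> I i l"
    and "y \<in> carrier R" "y' \<in> carrier R" "y' \<ominus> y \<in> I j l"
  shows "x' \<otimes> y' \<ominus> x \<otimes> y \<in> I i l"
proof -
  have x: "x \<in> carrier R" using I_carrier[OF assms(1,2,4)] .
  have "(x' \<ominus> x) \<otimes> y' \<in> I i l" using assms by (intro I_mult_right) auto
  moreover have "x \<otimes> (y' \<ominus> y) \<in> I i l" using assms by (intro I_mult) auto
  ultimately have "(x' \<ominus> x) \<otimes> y' \<oplus> x \<otimes> (y' \<ominus> y) \<in> I i l" using assms I_add by blast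
  then show ?thesis using mult_diff_split[OF assms(5,8) x assms(7)] by simp
qed

definition Imat :: "(nat \<Rightarrow> nat \<Rightarrow> 'a) set" where
  "Imat = {m. \<forall>i\<in>{1..d}. \<forall>j\<in>{1..d}. m i j \<in> I i j}"

definition mat_class :: "(nat \<Rightarrow> nat \<Rightarrow> 'a) \<Rightarrow> nat \<Rightarrow> nat \<Rightarrow> 'a set" where
  "mat_class m = (\<lambda>i j. if i \<in> {1..d} \<and> j \<in> {1..d} then I i (d+1) +> m i j else {})"

abbreviation "\<pi> \<equiv> mat_class"

lemma mat_class_cong:
  "(\<And>i j. i \<in> {1..d} \<Longrightarrow> j \<in> {1..d} \<Longrightarrow> f i j = g i j) \<Longrightarrow> \<pi> f = \<pi> g"
  unfolding mat_class_def by (intro ext) auto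

lemma mat_class_eqI:
  assumes "\<And>i j. i \<in> {1..d} \<Longrightarrow> j \<in> {1..d} \<Longrightarrow>
    m i j \<in> carrier R \<and> n i j \<in> carrier R \<and> m i j \<ominus> n i j \<in> I i (d+1)"
  shows "\<pi> m = \<pi> n"
  unfolding mat_class_def
  using rcos_eq_iff_diff[OF ideal_I_top] assms by (intro ext) auto

lemma Imat_carrier: "m \<in> Imat \<Longrightarrow> i \<in> {1..d} \<Longrightarrow> j \<in> {1..d} \<Longrightarrow> m i j \<in> carrier R"
  unfolding Imat_def using I_carrier by force

lemma Imat_add: "m \<in> Imat \<Longrightarrow> n \<in> Imat \<Longrightarrow> (\<lambda>i j. m i j \<oplus> n i j) \<in> Imat"
  unfolding Imat_def using I_add by auto

lemma Imat_neg: "m \<in> Imat \<Longrightarrow> (\<lambda>i j. \<ominus> m i j) \<in> Imat"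
  unfolding Imat_def using I_neg by auto

lemma Imat_diff: "m \<in> Imat \<Longrightarrow> n \<in> Imat \<Longrightarrow> (\<lambda>i j. m i j \<ominus> n i j) \<in> Imat"
  unfolding Imat_def using I_diff by auto

lemma Imat_zero: "(\<lambda>i j. \<zero>) \<in> Imat"
  unfolding Imat_def using I_zero by auto

lemma Imat_one: "(\<lambda>i j. if i = j then \<one> else \<zero>) \<in> Imat"
  unfolding Imat_def using I_zero I_full by auto

lemma Imat_mult: "m \<in> Imat \<Longrightarrow> n \<in> Imat \<Longrightarrow> (\<lambda>i l. \<Oplus>j\<in>{1..d}. m i j \<otimes> n j l) \<in> Imat"
  unfolding Imat_def
proof clarify
  fix i l assume mn: "\<forall>i\<in>{1..d}. \<forall>j\<in>{1..d}. m i j \<in> I i j" "\<forall>i\<in>{1..d}. \<forall>j\<in>{1..d}. n i j \<in> I i j"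
    and "i \<in> {1..d}" "l \<in> {1..d}"
  show "(\<Oplus>j\<in>{1..d}. m i j \<otimes> n j l) \<in> I i l"
  proof (intro finsum_in_ideal)
    fix j assume "j \<in> {1..d}"
    then show "m i j \<otimes> n j l \<in> I i l" using \<open>i \<in> {1..d}\<close> \<open>l \<in> {1..d}\<close> mn
      by (intro I_mult[of i j l]) auto
  qed (use \<open>i \<in> {1..d}\<close> \<open>l \<in> {1..d}\<close> in \<open>auto intro: ideal_I\<close>)
qed

lemma Alg_carrier: "carrier A = \<pi> ` Imat"
proof
  show "\<pi> ` Imat \<subseteq> carrier A"
    unfolding Alg_def mat_class_def Imat_def Xset_def by auto
next
  show "carrier A \<subseteq> \<pi> ` Imat"
  proof
    fix M assume M: "M \<in> carrier A"
    define m where "m = (\<lambda>i j. SOME x. x \<in> I i j \<and> M i j = I i (d+1) +> x)"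
    have m: "m i j \<in> I i j \<and> M i j = I i (d+1) +> m i j" if "i \<in> {1..d}" "j \<in> {1..d}" for i j
    proof -
      have "M i j \<in> Xset R d I i j" using M that unfolding Alg_def by auto
      then have "\<exists>x. x \<in> I i j \<and> M i j = I i (d+1) +> x" unfolding Xset_def by auto
      then show ?thesis unfolding m_def by (rule someI_ex)
    qed
    have "M = \<pi> m"
    proof (intro ext)
      fix i j show "M i j = \<pi> m i j"
        using m[of i j] M unfolding mat_class_def Alg_def by auto
    qed
    moreover have "m \<in> Imat" using m unfolding Imat_def by auto
    ultimately show "M \<in> \<pi> ` Imat" by blast
  qed
qed

lemma mat_class_closed: "m \<in> Imat \<Longrightarrow> \<pi> m \<in> carrier A"
  using Alg_carrier by auto

lemma mat_class_add:
  assumes "m \<in> Imat" "n \<in> Imat"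
  shows "\<pi> m \<oplus>\<^bsub>A\<^esub> \<pi> n = \<pi> (\<lambda>i j. m i j \<oplus> n i j)"
proof (intro ext)
  fix i j
  show "(\<pi> m \<oplus>\<^bsub>A\<^esub> \<pi> n) i j = \<pi> (\<lambda>i j. m i j \<oplus> n i j) i j"
  proof (cases "i \<in> {1..d} \<and> j \<in> {1..d}")
    case True
    then have "m i j \<in> carrier R" "n i j \<in> carrier R" using Imat_carrier assms by auto
    then show ?thesis
      using True rcos_add_reps[OF ideal_I_top[of i]] unfolding Alg_def mat_class_def by simp
  qed (auto simp: Alg_def mat_class_def)
qed

lemma mat_class_mult:
  assumes "m \<in> Imat" "n \<in> Imat"
  shows "\<pi> m \<otimes>\<^bsub>A\<^esub> \<pi> n = \<pi> (\<lambda>i l. \<Oplus>j\<in>{1..d}. m i j \<otimes> n j l)"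
proof (intro ext)
  fix i l
  show "(\<pi> m \<otimes>\<^bsub>A\<^esub> \<pi> n) i l = \<pi> (\<lambda>i l. \<Oplus>j\<in>{1..d}. m i j \<otimes> n j l) i l"
  proof (cases "i \<in> {1..d} \<and> l \<in> {1..d}")
    case True
    let ?K = "I i (d+1)"
    have entry: "rep (\<pi> m i j) \<otimes> rep (\<pi> n j l) \<ominus> m i j \<otimes> n j l \<in> ?K"
      "rep (\<pi> m i j) \<otimes> rep (\<pi> n j l) \<in> carrier R" "m i j \<otimes> n j l \<in> carrier R"
      if j: "j \<in> {1..d}" for j
    proof -
      have c: "m i j \<in> carrier R" "n j l \<in> carrier R" using Imat_carrier assms True j by auto
      have r: "rep (\<pi> m i j) \<in> carrier R" "rep (\<pi> m i j) \<ominus> m i j \<in> ?K"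
        "rep (\<pi> n j l) \<in> carrier R" "rep (\<pi> n j l) \<ominus> n j l \<in> I j (d+1)"
        using True j c rep_rcos_closed[OF ideal_I_top] rep_rcos_diff[OF ideal_I_top]
        unfolding mat_class_def by auto
      have "m i j \<in> I i j" using assms True j unfolding Imat_def by auto
      then show "rep (\<pi> m i j) \<otimes> rep (\<pi> n j l) \<ominus> m i j \<otimes> n j l \<in> ?K"
        using True j r c by (intro mult_diff_in_I[of i j "d+1"]) auto
      show "rep (\<pi> m i j) \<otimes> rep (\<pi> n j l) \<in> carrier R" "m i j \<otimes> n j l \<in> carrier R"
        using r c by auto
    qed
    have "?K +> (\<Oplus>j\<in>{1..d}. rep (\<pi> m i j) \<otimes> rep (\<pi> n j l)) = ?K +> (\<Oplus>j\<in>{1..d}. m i j \<otimes> n j l)"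
      using True entry by (intro rcos_finsum_cong ideal_I_top) auto
    then show ?thesis using True unfolding Alg_def mat_class_def by simp
  qed (auto simp: Alg_def mat_class_def)
qed

lemma mat_class_zero: "\<zero>\<^bsub>A\<^esub> = \<pi> (\<lambda>i j. \<zero>)"
  unfolding Alg_def mat_class_def by simp

lemma mat_class_one: "\<one>\<^bsub>A\<^esub> = \<pi> (\<lambda>i j. if i = j then \<one> else \<zero>)"
  unfolding Alg_def mat_class_def by (intro ext) simp

lemma idem_e_eq: "idem_e R d I k = \<pi> (\<lambda>i j. if i = k \<and> j = k then \<one> else \<zero>)"
  unfolding idem_e_def mat_class_def by (intro ext) simp

lemma Alg_abelian_group: "abelian_group A"
proof (rule abelian_groupI)
  fix x y assume "x \<in> carrier A" "y \<in> carrier A"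
  then obtain m n where "m \<in> Imat" "n \<in> Imat" "x = \<pi> m" "y = \<pi> n" using Alg_carrier by auto
  then show "x \<oplus>\<^bsub>A\<^esub> y \<in> carrier A" using mat_class_add Imat_add mat_class_closed by simp
next
  show "\<zero>\<^bsub>A\<^esub> \<in> carrier A" using mat_class_zero Imat_zero mat_class_closed by simp
next
  fix x y z assume "x \<in> carrier A" "y \<in> carrier A" "z \<in> carrier A"
  then obtain m n p where "m \<in> Imat" "n \<in> Imat" "p \<in> Imat" "x = \<pi> m" "y = \<pi> n" "z = \<pi> p"
    using Alg_carrier by auto
  then show "x \<oplus>\<^bsub>A\<^esub> y \<oplus>\<^bsub>A\<^esub> z = x \<oplus>\<^bsub>A\<^esub> (y \<oplus>\<^bsub>A\<^esub> z)"
    using mat_class_add Imat_add by (auto intro!: mat_class_cong simp: a_assoc Imat_carrier)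
next
  fix x y assume "x \<in> carrier A" "y \<in> carrier A"
  then obtain m n where "m \<in> Imat" "n \<in> Imat" "x = \<pi> m" "y = \<pi> n" using Alg_carrier by auto
  then show "x \<oplus>\<^bsub>A\<^esub> y = y \<oplus>\<^bsub>A\<^esub> x"
    using mat_class_add by (auto intro!: mat_class_cong simp: a_comm Imat_carrier)
next
  fix x assume "x \<in> carrier A"
  then obtain m where "m \<in> Imat" "x = \<pi> m" using Alg_carrier by auto
  then show "\<zero>\<^bsub>A\<^esub> \<oplus>\<^bsub>A\<^esub> x = x"
    using mat_class_add mat_class_zero Imat_zero by (auto intro!: mat_class_cong simp: Imat_carrier)
next
  fix x assume "x \<in> carrier A"
  then obtain m where m: "m \<in> Imat" "x = \<pi> m" using Alg_carrier by auto
  have "\<pi> (\<lambda>i j. \<ominus> m i j) \<oplus>\<^bsub>A\<^esub> x = \<zero>\<^bsub>A\<^esub>"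
    using mat_class_add mat_class_zero Imat_neg m
    by (auto intro!: mat_class_cong simp: Imat_carrier l_neg)
  then show "\<exists>y\<in>carrier A. y \<oplus>\<^bsub>A\<^esub> x = \<zero>\<^bsub>A\<^esub>" using mat_class_closed Imat_neg m by blast
qed

lemma Alg_monoid: "monoid A"
proof (rule monoidI)
  fix x y assume "x \<in> carrier A" "y \<in> carrier A"
  then obtain m n where "m \<in> Imat" "n \<in> Imat" "x = \<pi> m" "y = \<pi> n" using Alg_carrier by auto
  then show "x \<otimes>\<^bsub>A\<^esub> y \<in> carrier A" using mat_class_mult Imat_mult mat_class_closed by simp
next
  show "\<one>\<^bsub>A\<^esub> \<in> carrier A" using mat_class_one Imat_one mat_class_closed by simp
next
  fix x y z assume "x \<in> carrier A" "y \<in> carrier A" "z \<in> carrier A"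
  then obtain m n p where h: "m \<in> Imat" "n \<in> Imat" "p \<in> Imat" "x = \<pi> m" "y = \<pi> n" "z = \<pi> p"
    using Alg_carrier by auto
  have "(\<Oplus>l\<in>{1..d}. (\<Oplus>j\<in>{1..d}. m i j \<otimes> n j l) \<otimes> p l q) =
      (\<Oplus>j\<in>{1..d}. m i j \<otimes> (\<Oplus>l\<in>{1..d}. n j l \<otimes> p l q))"
    if "i \<in> {1..d}" "q \<in> {1..d}" for i q
    by (rule finsum_mat_assoc) (use h that in \<open>auto simp: Imat_carrier\<close>)
  then show "x \<otimes>\<^bsub>A\<^esub> y \<otimes>\<^bsub>A\<^esub> z = x \<otimes>\<^bsub>A\<^esub> (y \<otimes>\<^bsub>A\<^esub> z)"
    using h mat_class_mult Imat_mult by (auto intro!: mat_class_cong)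
next
  fix x assume "x \<in> carrier A"
  then obtain m where h: "m \<in> Imat" "x = \<pi> m" using Alg_carrier by auto
  have "(\<Oplus>j\<in>{1..d}. (if i = j then \<one> else \<zero>) \<otimes> m j l) = m i l"
    "(\<Oplus>j\<in>{1..d}. m i j \<otimes> (if j = l then \<one> else \<zero>)) = m i l"
    if "i \<in> {1..d}" "l \<in> {1..d}" for i l
    using h that by (auto intro!: finsum_unit_mult finsum_mult_unit simp: Imat_carrier)
  then show "\<one>\<^bsub>A\<^esub> \<otimes>\<^bsub>A\<^esub> x = x" "x \<otimes>\<^bsub>A\<^esub> \<one>\<^bsub>A\<^esub> = x"
    using h mat_class_mult mat_class_one Imat_one by (auto intro!: mat_class_cong)
qed

lemma Alg_ring: "ring A"
proof (rule ringI)
  show "abelian_group A" by (rule Alg_abelian_group)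
  show "monoid A" by (rule Alg_monoid)
next
  fix x y z assume "x \<in> carrier A" "y \<in> carrier A" "z \<in> carrier A"
  then obtain m n p where h: "m \<in> Imat" "n \<in> Imat" "p \<in> Imat" "x = \<pi> m" "y = \<pi> n" "z = \<pi> p"
    using Alg_carrier by auto
  have "(\<Oplus>j\<in>{1..d}. (m i j \<oplus> n i j) \<otimes> p j l) = (\<Oplus>j\<in>{1..d}. m i j \<otimes> p j l) \<oplus> (\<Oplus>j\<in>{1..d}. n i j \<otimes> p j l)"
    "(\<Oplus>j\<in>{1..d}. p i j \<otimes> (m j l \<oplus> n j l)) = (\<Oplus>j\<in>{1..d}. p i j \<otimes> m j l) \<oplus> (\<Oplus>j\<in>{1..d}. p i j \<otimes> n j l)"
    if "i \<in> {1..d}" "l \<in> {1..d}" for i l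
    using h that by (auto intro!: finsum_add_mult finsum_mult_add simp: Imat_carrier)
  then show "(x \<oplus>\<^bsub>A\<^esub> y) \<otimes>\<^bsub>A\<^esub> z = x \<otimes>\<^bsub>A\<^esub> z \<oplus>\<^bsub>A\<^esub> y \<otimes>\<^bsub>A\<^esub> z"
    "z \<otimes>\<^bsub>A\<^esub> (x \<oplus>\<^bsub>A\<^esub> y) = z \<otimes>\<^bsub>A\<^esub> x \<oplus>\<^bsub>A\<^esub> z \<otimes>\<^bsub>A\<^esub> y"
    using h mat_class_mult mat_class_add Imat_mult Imat_add by (auto intro!: mat_class_cong)
qed

lemma mat_class_neg:
  assumes "m \<in> Imat"
  shows "\<ominus>\<^bsub>A\<^esub> \<pi> m = \<pi> (\<lambda>i j. \<ominus> m i j)"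
proof (rule abelian_group.minus_equality[OF Alg_abelian_group])
  show "\<pi> (\<lambda>i j. \<ominus> m i j) \<oplus>\<^bsub>A\<^esub> \<pi> m = \<zero>\<^bsub>A\<^esub>"
    using mat_class_add mat_class_zero Imat_neg assms
    by (auto intro!: mat_class_cong simp: Imat_carrier l_neg)
qed (use mat_class_closed Imat_neg assms in auto)

lemma mat_class_diff:
  assumes "m \<in> Imat" "n \<in> Imat"
  shows "\<pi> m \<ominus>\<^bsub>A\<^esub> \<pi> n = \<pi> (\<lambda>i j. m i j \<ominus> n i j)"
  using mat_class_neg mat_class_add Imat_neg assms
  by (auto intro!: mat_class_cong simp: a_minus_def minus_eq)

lemma mat_class_finsum:
  assumes "finite F" "\<And>l. l \<in> F \<Longrightarrow> g l \<in> Imat"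
  shows "finsum A (\<lambda>l. \<pi> (g l)) F = \<pi> (\<lambda>i j. \<Oplus>l\<in>F. g l i j)"
  using assms
proof (induction F rule: finite_induct)
  case empty
  interpret A: ring A by (rule Alg_ring)
  show ?case using mat_class_zero by simp
next
  case (insert x F)
  interpret A: ring A by (rule Alg_ring)
  have sum_F: "(\<lambda>i j. \<Oplus>l\<in>F. g l i j) \<in> Imat"
    unfolding Imat_def
  proof clarify
    fix i j assume "i \<in> {1..d}" "j \<in> {1..d}"
    then show "(\<Oplus>l\<in>F. g l i j) \<in> I i j"
      using insert by (intro finsum_in_ideal[OF ideal_I]) (auto simp: Imat_def)
  qed
  have "finsum A (\<lambda>l. \<pi> (g l)) (insert x F) = \<pi> (g x) \<oplus>\<^bsub>A\<^esub> finsum A (\<lambda>l. \<pi> (g l)) F"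
    by (rule A.finsum_insert) (use insert mat_class_closed in auto)
  also have "\<dots> = \<pi> (\<lambda>i j. g x i j \<oplus> (\<Oplus>l\<in>F. g l i j))"
    using insert mat_class_add sum_F by simp
  also have "\<dots> = \<pi> (\<lambda>i j. \<Oplus>l\<in>insert x F. g l i j)"
    by (rule mat_class_cong) (use insert in \<open>auto simp: Imat_carrier Pi_def\<close>)
  finally show ?case .
qed

subsection \<open>The ideals J_k\<close>

lemma Imat_idem_f: "(\<lambda>i j. if i = j \<and> k < i then \<one> else \<zero>) \<in> Imat"
  unfolding Imat_def using I_full I_zero by auto

lemma idem_f_eq: "idem_f R d I k = \<pi> (\<lambda>i j. if i = j \<and> k < i then \<one> else \<zero>)"
proof -
  let ?g = "\<lambda>l i j. if i = l \<and> j = l then \<one> else \<zero>"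
  have "idem_f R d I k = finsum A (\<lambda>l. \<pi> (?g l)) {k<..d}"
    unfolding idem_f_def idem_e_eq by simp
  also have "\<dots> = \<pi> (\<lambda>i j. \<Oplus>l\<in>{k<..d}. ?g l i j)"
    by (rule mat_class_finsum) (auto simp: Imat_def I_full I_zero)
  also have "\<dots> = \<pi> (\<lambda>i j. if i = j \<and> k < i then \<one> else \<zero>)"
  proof (rule mat_class_cong)
    fix i j assume "i \<in> {1..d}" "j \<in> {1..d}"
    have "(\<Oplus>l\<in>{k<..d}. ?g l i j) = (\<Oplus>l\<in>{k<..d}. if l = i then (if i = j then \<one> else \<zero>) else \<zero>)"
      by (rule finsum_cong') auto
    then show "(\<Oplus>l\<in>{k<..d}. ?g l i j) = (if i = j \<and> k < i then \<one> else \<zero>)"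
      using \<open>i \<in> {1..d}\<close> by (simp add: finsum_delta)
  qed
  finally show ?thesis .
qed

lemma Jid_ideal: "ideal (Jid R d I k) A"
  unfolding Jid_def using idem_f_eq Imat_idem_f mat_class_closed
  by (intro ring.genideal_ideal[OF Alg_ring]) auto

lemma idem_f_in_Jid: "idem_f R d I k \<in> Jid R d I k"
  unfolding Jid_def using idem_f_eq Imat_idem_f mat_class_closed
  by (intro ring.genideal_self'[OF Alg_ring]) auto

lemma mat_class_in_Jid:
  assumes "m \<in> Imat" "\<And>i l. i \<in> {1..d} \<Longrightarrow> l \<in> {1..d} \<Longrightarrow> l \<le> k \<Longrightarrow> m i l = \<zero>"
  shows "\<pi> m \<in> Jid R d I k"
proof -
  interpret J: ideal "Jid R d I k" A by (rule Jid_ideal)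
  have "\<pi> m \<otimes>\<^bsub>A\<^esub> idem_f R d I k = \<pi> m"
    unfolding idem_f_eq mat_class_mult[OF assms(1) Imat_idem_f]
  proof (rule mat_class_cong)
    fix i l assume il: "i \<in> {1..d}" "l \<in> {1..d}"
    have "(\<Oplus>j\<in>{1..d}. m i j \<otimes> (if j = l \<and> k < j then \<one> else \<zero>)) =
        (\<Oplus>j\<in>{1..d}. m i j \<otimes> (if j = l then \<one> else \<zero>))"
      by (rule finsum_cong') (use assms il Imat_carrier in auto)
    also have "\<dots> = m i l"
      by (rule finsum_mult_unit) (use assms(1) il Imat_carrier in auto)
    finally show "(\<Oplus>j\<in>{1..d}. m i j \<otimes> (if j = l \<and> k < j then \<one> else \<zero>)) = m i l" .
  qed
  then show ?thesis using J.I_l_closed[OF idem_f_in_Jid] mat_class_closed[OF assms(1)] by metis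
qed

definition low_cols :: "nat \<Rightarrow> (nat \<Rightarrow> nat \<Rightarrow> 'a) \<Rightarrow> bool" where
  "low_cols k m \<longleftrightarrow> (\<forall>i\<in>{1..d}. \<forall>j\<in>{1..d}. j \<le> k \<longrightarrow> m i j \<in> I i (k+1))"

definition col_ideal :: "nat \<Rightarrow> (nat \<Rightarrow> nat \<Rightarrow> 'a set) set" where
  "col_ideal k = {M \<in> carrier A. \<forall>i\<in>{1..d}. \<forall>j\<in>{1..d}. j \<le> k \<longrightarrow> M i j \<subseteq> I i (k+1)}"

lemma mat_class_in_col_ideal_iff:
  assumes "m \<in> Imat" "k \<le> d"
  shows "\<pi> m \<in> col_ideal k \<longleftrightarrow> low_cols k m"
proof -
  have "\<pi> m i j \<subseteq> I i (k+1) \<longleftrightarrow> m i j \<in> I i (k+1)" if "i \<in> {1..d}" "j \<in> {1..d}" for i j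
  proof -
    have "I i (d+1) +> m i j \<subseteq> I i (k+1) \<longleftrightarrow> m i j \<in> I i (k+1)"
      using that assms Imat_carrier
      by (intro rcos_subset_iff ideal_I_top ideal_I I_top_subset) auto
    then show ?thesis using that unfolding mat_class_def by simp
  qed
  then show ?thesis unfolding col_ideal_def low_cols_def using mat_class_closed assms by auto
qed

lemma low_cols_mult_left:
  assumes "w \<in> Imat" "low_cols k m" "k \<le> d"
  shows "low_cols k (\<lambda>i j. \<Oplus>l\<in>{1..d}. w i l \<otimes> m l j)"
  unfolding low_cols_def
proof clarify
  fix i j assume ij: "i \<in> {1..d}" "j \<in> {1..d}" "j \<le> k"
  show "(\<Oplus>l\<in>{1..d}. w i l \<otimes> m l j) \<in> I i (k+1)"
  proof (rule finsum_in_ideal)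
    fix l assume l: "l \<in> {1..d}"
    have "w i l \<in> I i l" using assms(1) ij l unfolding Imat_def by auto
    moreover have "m l j \<in> I l (k+1)" using assms(2) ij l unfolding low_cols_def by auto
    ultimately show "w i l \<otimes> m l j \<in> I i (k+1)" using ij l assms(3) by (intro I_mult[of i l]) auto
  qed (use ij assms(3) in \<open>auto intro: ideal_I\<close>)
qed

lemma low_cols_mult_right:
  assumes "m \<in> Imat" "low_cols k m" "w \<in> Imat" "k \<le> d"
  shows "low_cols k (\<lambda>i j. \<Oplus>l\<in>{1..d}. m i l \<otimes> w l j)"
  unfolding low_cols_def
proof clarify
  fix i j assume ij: "i \<in> {1..d}" "j \<in> {1..d}" "j \<le> k"
  show "(\<Oplus>l\<in>{1..d}. m i l \<otimes> w l j) \<in> I i (k+1)"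
  proof (rule finsum_in_ideal)
    fix l assume l: "l \<in> {1..d}"
    have "m i l \<in> I i (k+1)"
    proof (cases "l \<le> k")
      case True
      then show ?thesis using assms(2) ij l unfolding low_cols_def by auto
    next
      case False
      have "m i l \<in> I i l" using assms(1) ij l unfolding Imat_def by auto
      moreover have "I i l \<subseteq> I i (k+1)" using ij l False by (intro I_antimono) auto
      ultimately show ?thesis by auto
    qed
    then show "m i l \<otimes> w l j \<in> I i (k+1)"
      using ij l assms(4) Imat_carrier[OF assms(3)] by (intro I_mult_right) auto
  qed (use ij assms(4) in \<open>auto intro: ideal_I\<close>)
qed

lemma col_ideal_ideal:
  assumes "k \<le> d"
  shows "ideal (col_ideal k) A"
proof (rule idealI[OF Alg_ring])
  have col_ideal_eq: "col_ideal k = \<pi> ` {m \<in> Imat. low_cols k m}"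
    using mat_class_in_col_ideal_iff[OF _ assms] Alg_carrier unfolding col_ideal_def by auto
  show "subgroup (col_ideal k) (add_monoid A)"
  proof (rule group.subgroupI[OF abelian_group.a_group[OF Alg_abelian_group]])
    show "col_ideal k \<subseteq> carrier (add_monoid A)" unfolding col_ideal_def by auto
    have "low_cols k (\<lambda>i j. \<zero>)" unfolding low_cols_def using I_zero assms by auto
    then show "col_ideal k \<noteq> {}" using col_ideal_eq Imat_zero by blast
  next
    fix a assume "a \<in> col_ideal k"
    then obtain m where m: "m \<in> Imat" "low_cols k m" "a = \<pi> m" using col_ideal_eq by auto
    have "low_cols k (\<lambda>i j. \<ominus> m i j)" using m(2) I_neg assms unfolding low_cols_def by auto
    then show "inv\<^bsub>add_monoid A\<^esub> a \<in> col_ideal k"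
      using m mat_class_neg Imat_neg col_ideal_eq by (auto simp: a_inv_def)
  next
    fix a b assume "a \<in> col_ideal k" "b \<in> col_ideal k"
    then obtain m n where m: "m \<in> Imat" "low_cols k m" "a = \<pi> m"
      and n: "n \<in> Imat" "low_cols k n" "b = \<pi> n" using col_ideal_eq by auto
    have "low_cols k (\<lambda>i j. m i j \<oplus> n i j)" using m(2) n(2) I_add assms unfolding low_cols_def by auto
    then show "a \<otimes>\<^bsub>add_monoid A\<^esub> b \<in> col_ideal k"
      using m n mat_class_add Imat_add col_ideal_eq by auto
  qed
next
  fix a x assume "a \<in> col_ideal k" "x \<in> carrier A"
  then obtain m w where "m \<in> Imat" "low_cols k m" "a = \<pi> m" "w \<in> Imat" "x = \<pi> w"
    using mat_class_in_col_ideal_iff[OF _ assms] Alg_carrier unfolding col_ideal_def by auto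
  then show "x \<otimes>\<^bsub>A\<^esub> a \<in> col_ideal k" "a \<otimes>\<^bsub>A\<^esub> x \<in> col_ideal k"
    using mat_class_mult Imat_mult mat_class_in_col_ideal_iff[OF _ assms]
      low_cols_mult_left[OF _ _ assms] low_cols_mult_right[OF _ _ _ assms] by auto
qed

lemma Jid_subset_col_ideal: "k \<le> d \<Longrightarrow> Jid R d I k \<subseteq> col_ideal k"
  unfolding Jid_def
proof (rule ring.genideal_minimal[OF Alg_ring col_ideal_ideal])
  assume "k \<le> d"
  then show "{idem_f R d I k} \<subseteq> col_ideal k"
    using idem_f_eq mat_class_in_col_ideal_iff[OF Imat_idem_f] I_zero
    by (auto simp: low_cols_def)
qed

end

locale ideal_system_k = ideal_system +
  fixes k :: nat
  assumes k_ge_1: "1 \<le> k" and k_le_d: "k \<le> d"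
begin

abbreviation "J \<equiv> Jid R d I k"
abbreviation "J' \<equiv> Jid R d I (k-1)"
abbreviation "T \<equiv> Tmod R d I (d+1-k)"

abbreviation "Icol \<equiv> {c. \<forall>i\<in>{1..d}. c i \<in> I i k}"
abbreviation "col_mat c \<equiv> \<pi> (\<lambda>i l. if l = k then c i else \<zero>)"
abbreviation "col_cos c \<equiv> (\<lambda>i. if i \<in> {1..d} then I i (k+1) +> c i else {})"

lemma k_in_range: "k \<in> {1..d}"
  using k_ge_1 k_le_d by auto

lemma ideal_I_succ: "i \<in> {1..d} \<Longrightarrow> ideal (I i (k+1)) R"
  using k_le_d by (intro ideal_I) auto

lemma Icol_carrier: "c \<in> Icol \<Longrightarrow> i \<in> {1..d} \<Longrightarrow> c i \<in> carrier R"
  using I_carrier[of i k "c i"] k_in_range by auto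

lemma Imat_col_mat: "c \<in> Icol \<Longrightarrow> (\<lambda>i l. if l = k then c i else \<zero>) \<in> Imat"
  unfolding Imat_def using I_zero by auto

lemma col_mat_closed: "c \<in> Icol \<Longrightarrow> col_mat c \<in> carrier A"
  using mat_class_closed Imat_col_mat by auto

lemma col_cos_eqD:
  assumes "col_cos c = col_cos c'" "i \<in> {1..d}" "c i \<in> carrier R" "c' i \<in> carrier R"
  shows "c i \<ominus> c' i \<in> I i (k+1)"
  using fun_cong[OF assms(1), of i] rcos_eq_iff_diff[OF ideal_I_succ] assms(2-4) by simp

lemma rcos_succ_rep:
  assumes "i \<in> {1..d}" "x \<in> carrier R"
  shows "I i (k+1) +> rep (I i (d+1) +> x) = I i (k+1) +> x"
proof -
  have "rep (I i (d+1) +> x) \<ominus> x \<in> I i (d+1)" using rep_rcos_diff[OF ideal_I_top] assms by auto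
  moreover have "I i (d+1) \<subseteq> I i (k+1)" using assms k_le_d by (intro I_top_subset) auto
  ultimately show ?thesis
    using rcos_eq_iff_diff[OF ideal_I_succ] rep_rcos_closed[OF ideal_I_top] assms by auto
qed

lemma mat_class_mult_idem_e:
  assumes "m \<in> Imat"
  shows "\<pi> m \<otimes>\<^bsub>A\<^esub> idem_e R d I k = col_mat (\<lambda>i. m i k)"
proof -
  have e: "(\<lambda>i j. if i = k \<and> j = k then \<one> else \<zero>) \<in> Imat"
    unfolding Imat_def using I_zero I_full by auto
  show ?thesis unfolding idem_e_eq mat_class_mult[OF assms e]
  proof (rule mat_class_cong)
    fix i l assume il: "i \<in> {1..d}" "l \<in> {1..d}"
    have "(\<Oplus>j\<in>{1..d}. m i j \<otimes> (if j = k \<and> l = k then \<one> else \<zero>)) =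
        (\<Oplus>j\<in>{1..d}. if j = k then (if l = k then m i k else \<zero>) else \<zero>)"
      by (rule finsum_cong') (use assms il Imat_carrier in auto)
    then show "(\<Oplus>j\<in>{1..d}. m i j \<otimes> (if j = k \<and> l = k then \<one> else \<zero>)) = (if l = k then m i k else \<zero>)"
      using k_in_range Imat_carrier[OF assms il(1) k_in_range] by (simp add: finsum_delta)
  qed
qed

lemma Imat_act_Icol:
  assumes "w \<in> Imat" "c \<in> Icol"
  shows "(\<lambda>i. \<Oplus>j\<in>{1..d}. w i j \<otimes> c j) \<in> Icol"
proof clarify
  fix i assume i: "i \<in> {1..d}"
  show "(\<Oplus>j\<in>{1..d}. w i j \<otimes> c j) \<in> I i k"
  proof (rule finsum_in_ideal)
    fix j assume j: "j \<in> {1..d}"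
    have "w i j \<in> I i j" "c j \<in> I j k" using assms i j unfolding Imat_def by auto
    then show "w i j \<otimes> c j \<in> I i k" using i j k_in_range by (intro I_mult[of i j k]) auto
  qed (use i k_in_range in \<open>auto intro: ideal_I\<close>)
qed

subsection \<open>The module \<Delta>_k\<close>

lemma Delta_carrier: "lcarrier (Delta R d I k) = {J +>\<^bsub>A\<^esub> col_mat c | c. c \<in> Icol}"
proof -
  interpret J: ideal J A by (rule Jid_ideal)
  have e: "idem_e R d I k \<in> carrier A"
    unfolding idem_e_eq by (rule mat_class_closed) (auto simp: Imat_def I_zero I_full)
  have "lcarrier (Delta R d I k) =
      {[mod J:] x \<Otimes>\<^bsub>A\<^esub> (J +>\<^bsub>A\<^esub> idem_e R d I k) | x. x \<in> a_rcosets\<^bsub>A\<^esub> J}"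
    unfolding Delta_def Let_def FactRing_def by simp
  also have "\<dots> = {J +>\<^bsub>A\<^esub> (a \<otimes>\<^bsub>A\<^esub> idem_e R d I k) | a. a \<in> carrier A}"
  proof -
    have "[mod J:] (J +>\<^bsub>A\<^esub> a) \<Otimes>\<^bsub>A\<^esub> (J +>\<^bsub>A\<^esub> idem_e R d I k) = J +>\<^bsub>A\<^esub> (a \<otimes>\<^bsub>A\<^esub> idem_e R d I k)"
      if "a \<in> carrier A" for a
      using J.rcoset_mult_add that e by simp
    then show ?thesis unfolding A_RCOSETS_def' by blast
  qed
  also have "\<dots> = {J +>\<^bsub>A\<^esub> col_mat c | c. c \<in> Icol}"
  proof (intro equalityI subsetI)
    fix z assume "z \<in> {J +>\<^bsub>A\<^esub> (a \<otimes>\<^bsub>A\<^esub> idem_e R d I k) | a. a \<in> carrier A}"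
    then obtain m where "m \<in> Imat" "z = J +>\<^bsub>A\<^esub> (\<pi> m \<otimes>\<^bsub>A\<^esub> idem_e R d I k)"
      using Alg_carrier by auto
    then show "z \<in> {J +>\<^bsub>A\<^esub> col_mat c | c. c \<in> Icol}"
      using mat_class_mult_idem_e k_in_range unfolding Imat_def by auto
  next
    fix z assume "z \<in> {J +>\<^bsub>A\<^esub> col_mat c | c. c \<in> Icol}"
    then obtain c where c: "c \<in> Icol" "z = J +>\<^bsub>A\<^esub> col_mat c" by auto
    have "col_mat c \<otimes>\<^bsub>A\<^esub> idem_e R d I k = col_mat c"
      using mat_class_mult_idem_e[OF Imat_col_mat[OF c(1)]] by (simp cong: if_cong)
    then have "z = J +>\<^bsub>A\<^esub> (col_mat c \<otimes>\<^bsub>A\<^esub> idem_e R d I k)" using c(2) by simp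
    then show "z \<in> {J +>\<^bsub>A\<^esub> (a \<otimes>\<^bsub>A\<^esub> idem_e R d I k) | a. a \<in> carrier A}"
      using col_mat_closed[OF c(1)] by blast
  qed
  finally show ?thesis .
qed

lemma Delta_add:
  assumes "c \<in> Icol" "c' \<in> Icol"
  shows "ladd (Delta R d I k) (J +>\<^bsub>A\<^esub> col_mat c) (J +>\<^bsub>A\<^esub> col_mat c') = J +>\<^bsub>A\<^esub> col_mat (\<lambda>i. c i \<oplus> c' i)"
proof -
  interpret J: ideal J A by (rule Jid_ideal)
  have "ladd (Delta R d I k) (J +>\<^bsub>A\<^esub> col_mat c) (J +>\<^bsub>A\<^esub> col_mat c') = J +>\<^bsub>A\<^esub> (col_mat c \<oplus>\<^bsub>A\<^esub> col_mat c')"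
    unfolding Delta_def Let_def FactRing_def using J.a_rcos_sum col_mat_closed assms by simp
  also have "col_mat c \<oplus>\<^bsub>A\<^esub> col_mat c' = col_mat (\<lambda>i. c i \<oplus> c' i)"
    using mat_class_add[OF Imat_col_mat[OF assms(1)] Imat_col_mat[OF assms(2)]] by (auto intro!: mat_class_cong)
  finally show ?thesis .
qed

lemma Delta_act:
  assumes "w \<in> Imat" "c \<in> Icol"
  shows "lact (Delta R d I k) (\<pi> w) (J +>\<^bsub>A\<^esub> col_mat c) = J +>\<^bsub>A\<^esub> col_mat (\<lambda>i. \<Oplus>j\<in>{1..d}. w i j \<otimes> c j)"
proof -
  interpret J: ideal J A by (rule Jid_ideal)
  have "lact (Delta R d I k) (\<pi> w) (J +>\<^bsub>A\<^esub> col_mat c) = J +>\<^bsub>A\<^esub> (\<pi> w \<otimes>\<^bsub>A\<^esub> col_mat c)"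
    unfolding Delta_def Let_def FactRing_def
    using J.rcoset_mult_add col_mat_closed mat_class_closed assms by simp
  also have "\<pi> w \<otimes>\<^bsub>A\<^esub> col_mat c = col_mat (\<lambda>i. \<Oplus>j\<in>{1..d}. w i j \<otimes> c j)"
  proof (subst mat_class_mult[OF assms(1) Imat_col_mat[OF assms(2)]], intro mat_class_cong)
    fix i l assume il: "i \<in> {1..d}" "l \<in> {1..d}"
    show "(\<Oplus>j\<in>{1..d}. w i j \<otimes> (if l = k then c j else \<zero>)) =
        (if l = k then \<Oplus>j\<in>{1..d}. w i j \<otimes> c j else \<zero>)"
    proof (cases "l = k")
      case False
      then have "(\<Oplus>j\<in>{1..d}. w i j \<otimes> (if l = k then c j else \<zero>)) = (\<Oplus>j\<in>{1..d}. \<zero>)"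
        by (intro finsum_cong') (use assms il Imat_carrier in auto)
      then show ?thesis using False by simp
    qed simp
  qed
  finally show ?thesis .
qed

lemma col_mat_in_J:
  assumes c: "\<And>i. i \<in> {1..d} \<Longrightarrow> c i \<in> I i (k+1)"
  shows "col_mat c \<in> J"
proof (cases "k = d")
  case True
  have "col_mat c = \<pi> (\<lambda>i j. \<zero>)"
  proof (rule mat_class_eqI)
    fix i j assume "i \<in> {1..d}" "j \<in> {1..d}"
    then show "(if j = k then c i else \<zero>) \<in> carrier R \<and> \<zero> \<in> carrier R \<and>
        (if j = k then c i else \<zero>) \<ominus> \<zero> \<in> I i (d+1)"
      using c True I_carrier[of i "d+1" "c i"] I_zero[of i "d+1"] by (auto simp: minus_eq)
  qed
  then show ?thesis
    using mat_class_zero additive_subgroup.zero_closed[OF ideal.axioms(1)[OF Jid_ideal]] by simp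
next
  case False
  text \<open>col_mat c = b g, where b \<in> J has column k+1 equal to c and all other columns zero, and
    g is the matrix unit at (k+1, k).\<close>
  interpret J: ideal J A by (rule Jid_ideal)
  let ?b = "\<lambda>i l. if l = k+1 then c i else \<zero>"
  let ?g = "\<lambda>i l. if i = k+1 \<and> l = k then \<one> else \<zero>"
  have k1: "k+1 \<in> {1..d}" using False k_le_d by auto
  have cc: "i \<in> {1..d} \<Longrightarrow> c i \<in> carrier R" for i using c I_carrier[of _ "k+1"] k_le_d by force
  have b: "?b \<in> Imat" unfolding Imat_def using c I_zero by auto
  have g: "?g \<in> Imat" unfolding Imat_def using I_zero I_full k_le_d by auto
  have "\<pi> ?b \<in> J" using b by (intro mat_class_in_Jid) auto
  moreover have "\<pi> ?b \<otimes>\<^bsub>A\<^esub> \<pi> ?g = col_mat c"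
  proof (subst mat_class_mult[OF b g], intro mat_class_cong)
    fix i l assume il: "i \<in> {1..d}" "l \<in> {1..d}"
    have "(\<Oplus>j\<in>{1..d}. ?b i j \<otimes> ?g j l) =
        (\<Oplus>j\<in>{1..d}. if j = k+1 then (if l = k then c i else \<zero>) else \<zero>)"
      by (rule finsum_cong') (use cc il in auto)
    then show "(\<Oplus>j\<in>{1..d}. ?b i j \<otimes> ?g j l) = (if l = k then c i else \<zero>)"
      using k1 cc[OF il(1)] by (simp add: finsum_delta)
  qed
  ultimately show ?thesis using J.I_r_closed mat_class_closed[OF g] by metis
qed

subsection \<open>The module J_{k-1} T_{d+1-k}\<close>

lemma Tmod_ideal_index: "d + 2 - (d + 1 - k) = k + 1"
  using k_le_d by simp

lemma Tmod_carrier_iff: "t \<in> lcarrier T \<longleftrightarrow> (\<exists>y. (\<forall>i\<in>{1..d}. y i \<in> carrier R) \<and> t = col_cos y)"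
proof
  assume t: "t \<in> lcarrier T"
  then have t_cos: "\<forall>i. if i \<in> {1..d} then t i \<in> (\<Union>a\<in>carrier R. {I i (k+1) +> a}) else t i = {}"
    unfolding Tmod_def Tmod_ideal_index A_RCOSETS_def' by simp
  then have "\<forall>i\<in>{1..d}. \<exists>x. x \<in> carrier R \<and> t i = I i (k+1) +> x"
    by (metis UN_E singletonD)
  from bchoice[OF this] obtain y where y: "\<forall>i\<in>{1..d}. y i \<in> carrier R \<and> t i = I i (k+1) +> y i"
    by blast
  have "t = col_cos y"
  proof
    fix i show "t i = col_cos y i" using y t_cos by (cases "i \<in> {1..d}") auto
  qed
  then show "\<exists>y. (\<forall>i\<in>{1..d}. y i \<in> carrier R) \<and> t = col_cos y" using y by blast
next
  assume "\<exists>y. (\<forall>i\<in>{1..d}. y i \<in> carrier R) \<and> t = col_cos y"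
  then obtain y where y: "\<forall>i\<in>{1..d}. y i \<in> carrier R" "t = col_cos y" by blast
  then show "t \<in> lcarrier T"
    unfolding Tmod_def Tmod_ideal_index A_RCOSETS_def' by auto
qed

lemma Tmod_add:
  assumes "\<And>i. i \<in> {1..d} \<Longrightarrow> y i \<in> carrier R \<and> z i \<in> carrier R"
  shows "ladd T (col_cos y) (col_cos z) = col_cos (\<lambda>i. y i \<oplus> z i)"
proof
  fix i
  show "ladd T (col_cos y) (col_cos z) i = col_cos (\<lambda>i. y i \<oplus> z i) i"
  proof (cases "i \<in> {1..d}")
    case True
    then show ?thesis
      using assms rcos_add_reps[OF ideal_I_succ[OF True]] unfolding Tmod_def Tmod_ideal_index by simp
  next
    case False
    then show ?thesis by (simp add: Tmod_def del: atLeastAtMost_iff)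
  qed
qed

lemma Tmod_act:
  assumes w: "w \<in> Imat" and y: "\<And>i. i \<in> {1..d} \<Longrightarrow> y i \<in> carrier R"
  shows "lact T (\<pi> w) (col_cos y) = col_cos (\<lambda>i. \<Oplus>j\<in>{1..d}. w i j \<otimes> y j)"
proof
  fix i
  show "lact T (\<pi> w) (col_cos y) i = col_cos (\<lambda>i. \<Oplus>j\<in>{1..d}. w i j \<otimes> y j) i"
  proof (cases "i \<in> {1..d}")
    case True
    let ?K = "I i (k+1)"
    have entry: "rep (\<pi> w i j) \<otimes> rep (col_cos y j) \<ominus> w i j \<otimes> y j \<in> ?K"
      "rep (\<pi> w i j) \<otimes> rep (col_cos y j) \<in> carrier R" "w i j \<otimes> y j \<in> carrier R"
      if j: "j \<in> {1..d}" for j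
    proof -
      have c: "w i j \<in> carrier R" "y j \<in> carrier R" using Imat_carrier w y True j by auto
      have r: "rep (\<pi> w i j) \<in> carrier R" "rep (\<pi> w i j) \<ominus> w i j \<in> I i (d+1)"
        "rep (col_cos y j) \<in> carrier R" "rep (col_cos y j) \<ominus> y j \<in> I j (k+1)"
        using True j c rep_rcos_closed[OF ideal_I_top] rep_rcos_diff[OF ideal_I_top]
          rep_rcos_closed[OF ideal_I_succ] rep_rcos_diff[OF ideal_I_succ]
        unfolding mat_class_def by auto
      have "I i (d+1) \<subseteq> ?K" using True k_le_d by (intro I_top_subset) auto
      moreover have "w i j \<in> I i j" using w True j unfolding Imat_def by auto
      ultimately show "rep (\<pi> w i j) \<otimes> rep (col_cos y j) \<ominus> w i j \<otimes> y j \<in> ?K"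
        using True j r c k_le_d by (intro mult_diff_in_I[of i j "k+1"]) auto
      show "rep (\<pi> w i j) \<otimes> rep (col_cos y j) \<in> carrier R" "w i j \<otimes> y j \<in> carrier R"
        using r c by auto
    qed
    have "?K +> (\<Oplus>j\<in>{1..d}. rep (\<pi> w i j) \<otimes> rep (col_cos y j)) = ?K +> (\<Oplus>j\<in>{1..d}. w i j \<otimes> y j)"
      using True entry by (intro rcos_finsum_cong ideal_I_succ) auto
    then show ?thesis using True unfolding Tmod_def Tmod_ideal_index by simp
  next
    case False
    then show ?thesis by (simp add: Tmod_def del: atLeastAtMost_iff)
  qed
qed

lemma JT_parts:
  "lcarrier (JT R d I (k-1) (d+1-k)) = prod_sub (Tzero R d I (d+1-k)) T J'"
  "ladd (JT R d I (k-1) (d+1-k)) = ladd T"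
  "lact (JT R d I (k-1) (d+1-k)) = lact T"
  unfolding JT_def Let_def by simp_all

lemma Tzero_eq: "Tzero R d I (d+1-k) = col_cos (\<lambda>i. \<zero>)"
  unfolding Tzero_def Tmod_ideal_index by simp

lemma low_cols_act_Icol:
  assumes "w \<in> Imat" "low_cols (k-1) w" "\<And>j. j \<in> {1..d} \<Longrightarrow> y j \<in> carrier R"
  shows "(\<lambda>i. \<Oplus>j\<in>{1..d}. w i j \<otimes> y j) \<in> Icol"
proof clarify
  fix i assume i: "i \<in> {1..d}"
  show "(\<Oplus>j\<in>{1..d}. w i j \<otimes> y j) \<in> I i k"
  proof (rule finsum_in_ideal)
    fix j assume j: "j \<in> {1..d}"
    have "w i j \<in> I i k"
    proof (cases "j \<le> k-1")
      case True
      then show ?thesis using assms(2) i j k_ge_1 unfolding low_cols_def by auto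
    next
      case False
      have "w i j \<in> I i j" using assms(1) i j unfolding Imat_def by auto
      moreover have "I i j \<subseteq> I i k" using i j False k_ge_1 by (intro I_antimono) auto
      ultimately show ?thesis by auto
    qed
    then show "w i j \<otimes> y j \<in> I i k" using i j assms(3) k_in_range by (intro I_mult_right) auto
  qed (use i k_in_range in \<open>auto intro: ideal_I\<close>)
qed

lemma col_mat_in_J': "c \<in> Icol \<Longrightarrow> col_mat c \<in> J'"
  using Imat_col_mat k_ge_1 by (intro mat_class_in_Jid) auto

lemma JT_carrier_subset: "lcarrier (JT R d I (k-1) (d+1-k)) \<subseteq> {col_cos c | c. c \<in> Icol}"
proof
  fix x assume "x \<in> lcarrier (JT R d I (k-1) (d+1-k))"
  then have "x \<in> prod_sub (Tzero R d I (d+1-k)) T J'" using JT_parts by simp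
  then show "x \<in> {col_cos c | c. c \<in> Icol}"
  proof (induction rule: prod_sub.induct)
    case zero
    have "(\<lambda>i. \<zero>) \<in> Icol" using I_zero k_in_range by auto
    then show ?case unfolding Tzero_eq by (intro CollectI exI[of _ "\<lambda>i. \<zero>"]) simp
  next
    case (gen a t)
    have k': "k - 1 \<le> d" using k_le_d by simp
    then have a: "a \<in> col_ideal (k-1)" using subsetD[OF Jid_subset_col_ideal gen(1)] by simp
    then obtain w where w: "w \<in> Imat" "a = \<pi> w"
      using Alg_carrier unfolding col_ideal_def by auto
    with a have low: "low_cols (k-1) w" using mat_class_in_col_ideal_iff[OF w(1) k'] by simp
    from gen(2) obtain y where y: "\<forall>i\<in>{1..d}. y i \<in> carrier R" "t = col_cos y"
      unfolding Tmod_carrier_iff by blast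
    have "lact T a t = col_cos (\<lambda>i. \<Oplus>j\<in>{1..d}. w i j \<otimes> y j)"
      using Tmod_act[OF w(1)] y w(2) by simp
    moreover have "(\<lambda>i. \<Oplus>j\<in>{1..d}. w i j \<otimes> y j) \<in> Icol"
      using low_cols_act_Icol[OF w(1) low] y(1) by simp
    ultimately show ?case by (intro CollectI exI[of _ "\<lambda>i. \<Oplus>j\<in>{1..d}. w i j \<otimes> y j"]) simp
  next
    case (add x y)
    then obtain c c' where c: "c \<in> Icol" "x = col_cos c" "c' \<in> Icol" "y = col_cos c'" by blast
    then have "ladd T x y = col_cos (\<lambda>i. c i \<oplus> c' i)" using Tmod_add[of c c'] Icol_carrier by simp
    moreover have "(\<lambda>i. c i \<oplus> c' i) \<in> Icol" using c I_add k_in_range by auto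
    ultimately show ?case by (intro CollectI exI[of _ "\<lambda>i. c i \<oplus> c' i"]) simp
  qed
qed

text \<open>col_cos c = col_mat c \<cdot> t, where t is the column with entry 1 in row k and 0 elsewhere.\<close>
lemma col_cos_in_JT:
  assumes c: "c \<in> Icol"
  shows "col_cos c \<in> lcarrier (JT R d I (k-1) (d+1-k))"
proof -
  let ?t = "col_cos (\<lambda>l. if l = k then \<one> else \<zero>)"
  have t: "?t \<in> lcarrier T"
    unfolding Tmod_carrier_iff by (intro exI[of _ "\<lambda>l. if l = k then \<one> else \<zero>"]) auto
  have "lact T (col_mat c) ?t =
      col_cos (\<lambda>i. \<Oplus>j\<in>{1..d}. (if j = k then c i else \<zero>) \<otimes> (if j = k then \<one> else \<zero>))"
    using Tmod_act[OF Imat_col_mat[OF c]] by simp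
  also have "\<dots> = col_cos c"
  proof (intro ext if_cong refl)
    fix i assume i: "i \<in> {1..d}"
    have ci: "c i \<in> carrier R" using Icol_carrier[OF c i] .
    have "(\<Oplus>j\<in>{1..d}. (if j = k then c i else \<zero>) \<otimes> (if j = k then \<one> else \<zero>)) =
        (\<Oplus>j\<in>{1..d}. if j = k then c i else \<zero>)"
      by (rule finsum_cong') (use ci in auto)
    then show "I i (k+1) +> (\<Oplus>j\<in>{1..d}. (if j = k then c i else \<zero>) \<otimes> (if j = k then \<one> else \<zero>)) =
        I i (k+1) +> c i"
      using k_in_range ci by (simp add: finsum_delta)
  qed
  finally have "lact T (col_mat c) ?t = col_cos c" .
  moreover have "lact T (col_mat c) ?t \<in> prod_sub (Tzero R d I (d+1-k)) T J'"
    by (rule prod_sub.gen[OF col_mat_in_J'[OF c] t])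
  ultimately show ?thesis using JT_parts by simp
qed

lemma JT_carrier: "lcarrier (JT R d I (k-1) (d+1-k)) = {col_cos c | c. c \<in> Icol}"
  using JT_carrier_subset col_cos_in_JT by blast

subsection \<open>The isomorphism\<close>

text \<open>rep C is a matrix class in the coset C, and its entry at (i, k) is again a coset, so
  rep is applied twice to reach a ring element.\<close>
definition Delta_to_JT :: "(nat \<Rightarrow> nat \<Rightarrow> 'a set) set \<Rightarrow> nat \<Rightarrow> 'a set" where
  "Delta_to_JT C = (\<lambda>i. if i \<in> {1..d} then I i (k+1) +> rep (rep C i k) else {})"

lemma Delta_to_JT_col_mat:
  assumes c: "c \<in> Icol"
  shows "Delta_to_JT (J +>\<^bsub>A\<^esub> col_mat c) = col_cos c"
proof -
  let ?y = "rep (J +>\<^bsub>A\<^esub> col_mat c)"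
  have "?y \<in> carrier A"
    using ring.rep_rcos_closed[OF Alg_ring Jid_ideal[of k] col_mat_closed[OF c]] .
  then obtain v where v: "v \<in> Imat" "?y = \<pi> v" using Alg_carrier by auto
  have "\<pi> v \<ominus>\<^bsub>A\<^esub> col_mat c \<in> col_ideal k"
    using ring.rep_rcos_diff[OF Alg_ring Jid_ideal[of k] col_mat_closed[OF c]] v Jid_subset_col_ideal[OF k_le_d]
    by auto
  then have "low_cols k (\<lambda>i j. v i j \<ominus> (if j = k then c i else \<zero>))"
    using mat_class_diff[OF v(1) Imat_col_mat[OF c]] mat_class_in_col_ideal_iff[OF Imat_diff[OF v(1) Imat_col_mat[OF c]] k_le_d]
    by simp
  then have vk: "v i k \<ominus> c i \<in> I i (k+1)" if "i \<in> {1..d}" for i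
    using that k_in_range unfolding low_cols_def by fastforce
  show ?thesis unfolding Delta_to_JT_def
  proof (intro ext if_cong refl)
    fix i assume i: "i \<in> {1..d}"
    have vc: "v i k \<in> carrier R" using Imat_carrier[OF v(1) i k_in_range] .
    have "?y i k = I i (d+1) +> v i k" using v i k_in_range unfolding mat_class_def by simp
    then have "I i (k+1) +> rep (?y i k) = I i (k+1) +> v i k" using rcos_succ_rep[OF i vc] by simp
    also have "\<dots> = I i (k+1) +> c i"
      using rcos_eq_iff_diff[OF ideal_I_succ[OF i] vc Icol_carrier[OF c i]] vk[OF i] by simp
    finally show "I i (k+1) +> rep (?y i k) = I i (k+1) +> c i" .
  qed
qed

lemma Delta_to_JT_inj: "inj_on Delta_to_JT (lcarrier (Delta R d I k))"
proof (rule inj_onI)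
  fix x y assume "x \<in> lcarrier (Delta R d I k)" "y \<in> lcarrier (Delta R d I k)"
    and eq: "Delta_to_JT x = Delta_to_JT y"
  then obtain c c' where c: "c \<in> Icol" "x = J +>\<^bsub>A\<^esub> col_mat c" and c': "c' \<in> Icol" "y = J +>\<^bsub>A\<^esub> col_mat c'"
    using Delta_carrier by auto
  have "col_cos c = col_cos c'" using eq c c' Delta_to_JT_col_mat by simp
  then have "c i \<ominus> c' i \<in> I i (k+1)" if "i \<in> {1..d}" for i
    using col_cos_eqD that Icol_carrier c c' by auto
  then have "col_mat (\<lambda>i. c i \<ominus> c' i) \<in> J" by (rule col_mat_in_J)
  moreover have "col_mat c \<ominus>\<^bsub>A\<^esub> col_mat c' = col_mat (\<lambda>i. c i \<ominus> c' i)"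
    unfolding mat_class_diff[OF Imat_col_mat[OF c(1)] Imat_col_mat[OF c'(1)]]
    by (rule mat_class_cong) (auto simp: minus_eq)
  ultimately show "x = y"
    using ring.rcos_eq_iff_diff[OF Alg_ring Jid_ideal[of k] col_mat_closed[OF c(1)] col_mat_closed[OF c'(1)]] c c'
    by simp
qed

lemma Delta_to_JT_image:
  "Delta_to_JT ` lcarrier (Delta R d I k) = lcarrier (JT R d I (k-1) (d+1-k))"
  unfolding JT_carrier Delta_carrier
proof (intro equalityI subsetI)
  fix z assume "z \<in> Delta_to_JT ` {J +>\<^bsub>A\<^esub> col_mat c | c. c \<in> Icol}"
  then obtain c where c: "c \<in> Icol" "z = Delta_to_JT (J +>\<^bsub>A\<^esub> col_mat c)" by blast
  then have "z = col_cos c" using Delta_to_JT_col_mat by simp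
  then show "z \<in> {col_cos c | c. c \<in> Icol}" using c(1) by blast
next
  fix z assume "z \<in> {col_cos c | c. c \<in> Icol}"
  then obtain c where c: "c \<in> Icol" "z = col_cos c" by blast
  then have "z = Delta_to_JT (J +>\<^bsub>A\<^esub> col_mat c)" using Delta_to_JT_col_mat by simp
  moreover have "J +>\<^bsub>A\<^esub> col_mat c \<in> {J +>\<^bsub>A\<^esub> col_mat c | c. c \<in> Icol}" using c(1) by blast
  ultimately show "z \<in> Delta_to_JT ` {J +>\<^bsub>A\<^esub> col_mat c | c. c \<in> Icol}" by blast
qed

lemma Delta_to_JT_add:
  assumes "x \<in> lcarrier (Delta R d I k)" "y \<in> lcarrier (Delta R d I k)"
  shows "Delta_to_JT (ladd (Delta R d I k) x y) =
    ladd (JT R d I (k-1) (d+1-k)) (Delta_to_JT x) (Delta_to_JT y)"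
proof -
  obtain c c' where c: "c \<in> Icol" "x = J +>\<^bsub>A\<^esub> col_mat c" and c': "c' \<in> Icol" "y = J +>\<^bsub>A\<^esub> col_mat c'"
    using assms Delta_carrier by auto
  have "(\<lambda>i. c i \<oplus> c' i) \<in> Icol" using c c' I_add k_in_range by auto
  then show ?thesis
    using Delta_add[OF c(1) c'(1)] Delta_to_JT_col_mat c c' Tmod_add[of c c'] Icol_carrier JT_parts
    by simp
qed

lemma Delta_to_JT_act:
  assumes "a \<in> carrier A" "x \<in> lcarrier (Delta R d I k)"
  shows "Delta_to_JT (lact (Delta R d I k) a x) = lact (JT R d I (k-1) (d+1-k)) a (Delta_to_JT x)"
proof -
  obtain c where c: "c \<in> Icol" "x = J +>\<^bsub>A\<^esub> col_mat c" using assms(2) Delta_carrier by auto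
  obtain w where w: "w \<in> Imat" "a = \<pi> w" using assms(1) Alg_carrier by auto
  show ?thesis
    using Delta_act[OF w(1) c(1)] Delta_to_JT_col_mat[OF Imat_act_Icol[OF w(1) c(1)]] Delta_to_JT_col_mat[OF c(1)]
      Tmod_act[OF w(1), of c] Icol_carrier c w JT_parts
    by simp
qed

end

theorem lemma4p5:
  fixes R :: "('a,'m) ring_scheme" and d k :: nat and I :: "nat \<Rightarrow> nat \<Rightarrow> 'a set"
  assumes "d_system R d I" and "1 \<le> k" and "k \<le> d"
  shows "lmod_iso (Alg R d I) (Delta R d I k) (JT R d I (k - 1) (d + 1 - k))"
proof -
  interpret ideal_system_k R d I k
    using d_system_imp_ideal_system[OF assms(1)] assms(2,3)
    by (intro ideal_system_k.intro ideal_system_k_axioms.intro) auto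
  show ?thesis
    unfolding lmod_iso_def bij_betw_def
    using Delta_to_JT_inj Delta_to_JT_image Delta_to_JT_add Delta_to_JT_act by blast
qed

end
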